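(* Let $V$ be a finite-dimensional complex vector space with Lie brackets $[\,,]$ and $\{\,,\}$, $\mathfrak{g}=(V,[\,,])$, $\mathfrak{n}=(V,\{\,,\})$, with $\mathfrak{n}$ semisimple. Let $x\cdot y$ be a post-Lie algebra structure on $(\mathfrak{g},\mathfrak{n})$ with $x\cdot y=\{\phi(x),y\}$ for some $\phi\in\operatorname{End}(V)$, and assume that $[x,y]=\tau(\{x,y\})$ for all $x,y\in V$, for some $\tau\in\operatorname{End}(V)$. Then $\phi\in\operatorname{QDer}(\mathfrak{n})$.
   Context: A post-Lie algebra structure on $(\mathfrak{g},\mathfrak{n})$ is a bilinear product $x\cdot y$ on $V$ satisfying, for all $x,y,z\in V$: (1) $x\cdot y-y\cdot x=[x,y]-\{x,y\}$; (2) $[x,y]\cdot z=x\cdot(y\cdot z)-y\cdot(x\cdot z)$; (3) $x\cdot\{y,z\}=\{x\cdot y,z\}+\{y,x\cdot z\}$. The quasiderivations of $\mathfrak{n}$ are $\operatorname{QDer}(\mathfrak{n})=\{\phi\in\operatorname{End}(\mathfrak{n})\mid\exists\,\sigma\in\operatorname{End}(\mathfrak{n})\text{ with }\sigma(\{x,y\})=\{\phi(x),y\}+\{x,\phi(y)\}\ \forall x,y\}$. *)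

theory Defs
  imports Complex_Main
begin

definition fd_complex_vs :: "(complex \<Rightarrow> 'v::ab_group_add \<Rightarrow> 'v) \<Rightarrow> bool" where
  "fd_complex_vs scale \<longleftrightarrow> (\<exists>B. finite_dimensional_vector_space scale B)"

definition is_End :: "(complex \<Rightarrow> 'v::ab_group_add \<Rightarrow> 'v) \<Rightarrow> ('v \<Rightarrow> 'v) \<Rightarrow> bool" where
  "is_End scale f \<longleftrightarrow> Vector_Spaces.linear scale scale f"

definition is_bilinear :: "(complex \<Rightarrow> 'v::ab_group_add \<Rightarrow> 'v) \<Rightarrow> ('v \<Rightarrow> 'v \<Rightarrow> 'v) \<Rightarrow> bool" where
  "is_bilinear scale b \<longleftrightarrow>
     (\<forall>y. Vector_Spaces.linear scale scale (\<lambda>x. b x y)) \<and>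
     (\<forall>x. Vector_Spaces.linear scale scale (\<lambda>y. b x y))"

definition lie_bracket :: "(complex \<Rightarrow> 'v::ab_group_add \<Rightarrow> 'v) \<Rightarrow> ('v \<Rightarrow> 'v \<Rightarrow> 'v) \<Rightarrow> bool" where
  "lie_bracket scale b \<longleftrightarrow> is_bilinear scale b \<and> (\<forall>x. b x x = 0) \<and>
     (\<forall>x y z. b x (b y z) + b y (b z x) + b z (b x y) = 0)"

definition lie_ideal :: "(complex \<Rightarrow> 'v::ab_group_add \<Rightarrow> 'v) \<Rightarrow> ('v \<Rightarrow> 'v \<Rightarrow> 'v) \<Rightarrow> 'v set \<Rightarrow> bool" where
  "lie_ideal scale b I \<longleftrightarrow> module.subspace scale I \<and> (\<forall>x y. y \<in> I \<longrightarrow> b x y \<in> I)"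

fun derived_series :: "(complex \<Rightarrow> 'v::ab_group_add \<Rightarrow> 'v) \<Rightarrow> ('v \<Rightarrow> 'v \<Rightarrow> 'v) \<Rightarrow> 'v set \<Rightarrow> nat \<Rightarrow> 'v set" where
  "derived_series scale b I 0 = I"
| "derived_series scale b I (Suc k) =
     module.span scale {b x y | x y. x \<in> derived_series scale b I k \<and> y \<in> derived_series scale b I k}"

definition solvable_ideal :: "(complex \<Rightarrow> 'v::ab_group_add \<Rightarrow> 'v) \<Rightarrow> ('v \<Rightarrow> 'v \<Rightarrow> 'v) \<Rightarrow> 'v set \<Rightarrow> bool" where
  "solvable_ideal scale b I \<longleftrightarrow> lie_ideal scale b I \<and> (\<exists>k. derived_series scale b I k = {0})"

definition semisimple :: "(complex \<Rightarrow> 'v::ab_group_add \<Rightarrow> 'v) \<Rightarrow> ('v \<Rightarrow> 'v \<Rightarrow> 'v) \<Rightarrow> bool" where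
  "semisimple scale b \<longleftrightarrow> lie_bracket scale b \<and>
     (\<forall>I. solvable_ideal scale b I \<longrightarrow> I = {0})"

text \<open>Post-Lie algebra structure on (g, n), g = (V, lb), n = (V, cb).\<close>
definition post_lie_structure ::
  "(complex \<Rightarrow> 'v::ab_group_add \<Rightarrow> 'v) \<Rightarrow> ('v \<Rightarrow> 'v \<Rightarrow> 'v) \<Rightarrow> ('v \<Rightarrow> 'v \<Rightarrow> 'v) \<Rightarrow> ('v \<Rightarrow> 'v \<Rightarrow> 'v) \<Rightarrow> bool" where
  "post_lie_structure scale lb cb pr \<longleftrightarrow> is_bilinear scale pr \<and>
     (\<forall>x y. pr x y - pr y x = lb x y - cb x y) \<and>
     (\<forall>x y z. pr (lb x y) z = pr x (pr y z) - pr y (pr x z)) \<and>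
     (\<forall>x y z. pr x (cb y z) = cb (pr x y) z + cb y (pr x z))"

definition QDer :: "(complex \<Rightarrow> 'v::ab_group_add \<Rightarrow> 'v) \<Rightarrow> ('v \<Rightarrow> 'v \<Rightarrow> 'v) \<Rightarrow> ('v \<Rightarrow> 'v) set" where
  "QDer scale cb = {\<phi>. is_End scale \<phi> \<and>
     (\<exists>\<sigma>. is_End scale \<sigma> \<and> (\<forall>x y. \<sigma> (cb x y) = cb (\<phi> x) y + cb x (\<phi> y)))}"

end

theory Submission
  imports Defs
begin

text \<open>The first post-Lie axiom with \<open>x \<cdot> y = {\<phi> x, y}\<close> and antisymmetry of \<open>{,}\<close> give
  \<open>[x,y] - {x,y} = {\<phi> x, y} + {x, \<phi> y}\<close>. Since \<open>[x,y] = \<tau> {x,y}\<close>, the endomorphism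
  \<open>\<sigma> = \<tau> - id\<close> witnesses that \<open>\<phi>\<close> is a quasiderivation.\<close>

lemma linear_minus_ident:
  assumes "Vector_Spaces.linear scale scale f"
  shows "Vector_Spaces.linear scale scale (\<lambda>x. f x - x)"
proof -
  have "vector_space scale" using assms by (simp add: Vector_Spaces.linear_iff)
  then interpret vector_space scale .
  show ?thesis
    using assms by (simp add: Vector_Spaces.linear_iff algebra_simps scale_right_diff_distrib)
qed

lemma lie_bracket_antisym:
  assumes "lie_bracket scale b"
  shows "b x y = - b y x"
proof -
  have add_left: "\<And>x y z. b (x + y) z = b x z + b y z"
    and add_right: "\<And>x y z. b z (x + y) = b z x + b z y"
    using assms by (auto simp: lie_bracket_def is_bilinear_def Vector_Spaces.linear_iff)
  have alt: "\<And>x. b x x = 0" using assms by (simp add: lie_bracket_def)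
  have "0 = b (x + y) (x + y)" by (rule alt[symmetric])
  also have "\<dots> = b x x + b x y + (b y x + b y y)" by (simp add: add_left add_right add.assoc)
  also have "\<dots> = b x y + b y x" by (simp add: alt)
  finally have "b x y + b y x = 0" by (rule sym)
  then show ?thesis by (simp add: eq_neg_iff_add_eq_0)
qed

lemma post_lie_bracket_difference:
  assumes "lie_bracket scale cb"
    and "post_lie_structure scale lb cb (\<lambda>x y. cb (\<phi> x) y)"
  shows "lb x y - cb x y = cb (\<phi> x) y + cb x (\<phi> y)"
proof -
  have "cb (\<phi> x) y - cb (\<phi> y) x = lb x y - cb x y"
    using assms(2) by (simp add: post_lie_structure_def)
  moreover have "cb x (\<phi> y) = - cb (\<phi> y) x"
    using assms(1) by (rule lie_bracket_antisym)
  ultimately show ?thesis by simp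
qed

theorem proposition6p1:
  fixes scale :: "complex \<Rightarrow> 'v::ab_group_add \<Rightarrow> 'v"
    and lb cb :: "'v \<Rightarrow> 'v \<Rightarrow> 'v"
    and \<phi> \<tau> :: "'v \<Rightarrow> 'v"
  assumes "fd_complex_vs scale"
    and "lie_bracket scale lb"
    and "lie_bracket scale cb"
    and "semisimple scale cb"
    and "is_End scale \<phi>"
    and "post_lie_structure scale lb cb (\<lambda>x y. cb (\<phi> x) y)"
    and "is_End scale \<tau>"
    and "\<forall>x y. lb x y = \<tau> (cb x y)"
  shows "\<phi> \<in> QDer scale cb"
proof -
  have "is_End scale (\<lambda>x. \<tau> x - x)"
    using assms(7) by (simp add: is_End_def linear_minus_ident)
  moreover have "\<tau> (cb x y) - cb x y = cb (\<phi> x) y + cb x (\<phi> y)" for x y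
    using post_lie_bracket_difference[OF assms(3,6)] assms(8) by simp
  ultimately show ?thesis
    using assms(5) unfolding QDer_def by blast
qed

end
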